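(* Assume $\xi>0$ and $K=1$. Then $\mathcal M^{N,1}_{\tilde J=0}(M_1,M_2)$ is the closure of $\mathring{\mathcal M}^{N,1}(M_1,M_2)$ in $\mathcal M^{N,1}(M_1,M_2)$.
   Context: Fix integers $N,M_1,M_2\ge0$ and $\xi>0$. $\mathcal M^{N,1}(M_1,M_2)$ is the space of tuples $(X,Y,I,J,\tilde X,\tilde Y,\tilde I,\tilde J,S)$ with $X,Y\in\mathrm{End}(\mathbb C^{M_1})$, $I\in\mathrm{Hom}(\mathbb C^N,\mathbb C^{M_1})$, $J\in\mathrm{Hom}(\mathbb C^{M_1},\mathbb C^N)$, $\tilde X,\tilde Y\in\mathrm{End}(\mathbb C^{M_2})$, $\tilde I\in\mathrm{Hom}(\mathbb C,\mathbb C^{M_2})$, $\tilde J\in\mathrm{Hom}(\mathbb C^{M_2},\mathbb C)$, $S\in\mathrm{Hom}(\mathbb C^{M_1},\mathbb C^{M_2})$ satisfying $[X,Y]+IJ=0$, $[\tilde X,\tilde Y]+\tilde I\tilde J=0$ and stability $\mathbb C\langle X,Y\rangle\mathrm{Im}(I)=\mathbb C^{M_1}$, $\mathbb C\langle\tilde X,\tilde Y\rangle(\mathrm{Im}\tilde I+\mathrm{Im}S)=\mathbb C^{M_2}$, modulo $GL_{M_1}\times GL_{M_2}$ acting by $(g,h)$: $X\mapsto gXg^{-1}$, $Y\mapsto gYg^{-1}$, $I\mapsto gI$, $J\mapsto Jg^{-1}$, similarly for tilded maps with $h$, $S\mapsto hSg^{-1}$. $\mathring{\mathcal M}^{N,1}(M_1,M_2)$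 is the open subvariety defined by $\mathbb C\langle\tilde X,\tilde Y\rangle\mathrm{Im}(\tilde I)=\mathbb C^{M_2}$, and $\mathcal M^{N,1}_{\tilde J=0}(M_1,M_2)$ is the closed subvariety defined by $\tilde J=0$. *)

theory Defs
  imports "HOL-Analysis.Analysis"
begin

text \<open>Complex matrices / vectors of arbitrary finite size, represented as zero-padded
  functions on indices. The topology on these function spaces is the product
  topology (library instance), which on each finite-dimensional subspace of padded
  matrices is the usual Euclidean (analytic) topology.\<close>

type_synonym cvec = "nat \<Rightarrow> complex"
type_synonym cmat = "nat \<Rightarrow> nat \<Rightarrow> complex"

definition is_vec :: "nat \<Rightarrow> cvec \<Rightarrow> bool" where
  "is_vec m v \<longleftrightarrow> (\<forall>i. m \<le> i \<longrightarrow> v i = 0)"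

definition is_mat :: "nat \<Rightarrow> nat \<Rightarrow> cmat \<Rightarrow> bool" where
  "is_mat m n A \<longleftrightarrow> (\<forall>i j. (m \<le> i \<or> n \<le> j) \<longrightarrow> A i j = 0)"

definition mmul :: "nat \<Rightarrow> cmat \<Rightarrow> cmat \<Rightarrow> cmat" where
  "mmul k A B = (\<lambda>i j. \<Sum>l<k. A i l * B l j)"

definition mvec :: "nat \<Rightarrow> cmat \<Rightarrow> cvec \<Rightarrow> cvec" where
  "mvec k A v = (\<lambda>i. \<Sum>l<k. A i l * v l)"

definition id_mat :: "nat \<Rightarrow> cmat" where
  "id_mat m = (\<lambda>i j. if i = j \<and> i < m then 1 else 0)"

definition zero_mat :: cmat where "zero_mat = (\<lambda>i j. 0)"

inductive_set gen_space :: "nat \<Rightarrow> cmat \<Rightarrow> cmat \<Rightarrow> cvec set \<Rightarrow> cvec set"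
  for m X Y G where
  gen_base: "v \<in> G \<Longrightarrow> v \<in> gen_space m X Y G"
| gen_zero: "(\<lambda>i. 0) \<in> gen_space m X Y G"
| gen_add: "v \<in> gen_space m X Y G \<Longrightarrow> w \<in> gen_space m X Y G \<Longrightarrow> (\<lambda>i. v i + w i) \<in> gen_space m X Y G"
| gen_smult: "v \<in> gen_space m X Y G \<Longrightarrow> (\<lambda>i. c * v i) \<in> gen_space m X Y G"
| gen_X: "v \<in> gen_space m X Y G \<Longrightarrow> mvec m X v \<in> gen_space m X Y G"
| gen_Y: "v \<in> gen_space m X Y G \<Longrightarrow> mvec m Y v \<in> gen_space m X Y G"

definition img :: "nat \<Rightarrow> cmat \<Rightarrow> cvec set" where
  "img n A = {mvec n A w | w. is_vec n w}"

type_synonym quiv = "cmat \<times> cmat \<times> cmat \<times> cmat \<times> cmat \<times> cmat \<times> cmat \<times> cmat \<times> cmat"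

definition stab_locus :: "nat \<Rightarrow> nat \<Rightarrow> nat \<Rightarrow> quiv set" where
  "stab_locus N M1 M2 = {(X, Y, I, J, Xt, Yt, It, Jt, S).
     is_mat M1 M1 X \<and> is_mat M1 M1 Y \<and> is_mat M1 N I \<and> is_mat N M1 J \<and>
     is_mat M2 M2 Xt \<and> is_mat M2 M2 Yt \<and> is_mat M2 1 It \<and> is_mat 1 M2 Jt \<and>
     is_mat M2 M1 S \<and>
     (\<lambda>i j. mmul M1 X Y i j - mmul M1 Y X i j + mmul N I J i j) = zero_mat \<and>
     (\<lambda>i j. mmul M2 Xt Yt i j - mmul M2 Yt Xt i j + mmul 1 It Jt i j) = zero_mat \<and>
     {v. is_vec M1 v} \<subseteq> gen_space M1 X Y (img N I) \<and>
     {v. is_vec M2 v} \<subseteq> gen_space M2 Xt Yt (img 1 It \<union> img M1 S)}"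

definition invertible_mat :: "nat \<Rightarrow> cmat \<Rightarrow> cmat \<Rightarrow> bool" where
  "invertible_mat m g gi \<longleftrightarrow> is_mat m m g \<and> is_mat m m gi \<and>
     mmul m g gi = id_mat m \<and> mmul m gi g = id_mat m"

definition act :: "nat \<Rightarrow> nat \<Rightarrow> nat \<Rightarrow> cmat \<Rightarrow> cmat \<Rightarrow> cmat \<Rightarrow> cmat \<Rightarrow> quiv \<Rightarrow> quiv" where
  "act N M1 M2 g gi h hi q = (case q of (X, Y, I, J, Xt, Yt, It, Jt, S) \<Rightarrow>
     (mmul M1 (mmul M1 g X) gi, mmul M1 (mmul M1 g Y) gi, mmul M1 g I, mmul M1 J gi,
      mmul M2 (mmul M2 h Xt) hi, mmul M2 (mmul M2 h Yt) hi, mmul M2 h It, mmul M2 Jt hi,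
      mmul M1 (mmul M2 h S) gi))"

definition orbit :: "nat \<Rightarrow> nat \<Rightarrow> nat \<Rightarrow> quiv \<Rightarrow> quiv set" where
  "orbit N M1 M2 q = {q'. \<exists>g gi h hi. invertible_mat M1 g gi \<and> invertible_mat M2 h hi \<and>
      q' = act N M1 M2 g gi h hi q}"

definition moduli :: "nat \<Rightarrow> nat \<Rightarrow> nat \<Rightarrow> quiv set set" where
  "moduli N M1 M2 = orbit N M1 M2 ` stab_locus N M1 M2"

definition moduli_top :: "nat \<Rightarrow> nat \<Rightarrow> nat \<Rightarrow> quiv set topology" where
  "moduli_top N M1 M2 = topology (\<lambda>W. W \<subseteq> moduli N M1 M2 \<and>
     openin (top_of_set (stab_locus N M1 M2))
       {q \<in> stab_locus N M1 M2. orbit N M1 M2 q \<in> W})"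

definition moduli_open :: "nat \<Rightarrow> nat \<Rightarrow> nat \<Rightarrow> quiv set set" where
  "moduli_open N M1 M2 = orbit N M1 M2 ` {(X, Y, I, J, Xt, Yt, It, Jt, S) \<in> stab_locus N M1 M2.
      {v. is_vec M2 v} \<subseteq> gen_space M2 Xt Yt (img 1 It)}"

definition moduli_Jt0 :: "nat \<Rightarrow> nat \<Rightarrow> nat \<Rightarrow> quiv set set" where
  "moduli_Jt0 N M1 M2 = orbit N M1 M2 ` {(X, Y, I, J, Xt, Yt, It, Jt, S) \<in> stab_locus N M1 M2.
      Jt = zero_mat}"

lemma istopology_preimage:
  "istopology (\<lambda>W. W \<subseteq> M \<and> openin (top_of_set S) {q \<in> S. f q \<in> W})"
proof -
  have i: "{q \<in> S. f q \<in> U \<inter> V} = {q \<in> S. f q \<in> U} \<inter> {q \<in> S. f q \<in> V}" for U V by blast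
  have u: "{q \<in> S. f q \<in> \<Union>K} = (\<Union>U\<in>K. {q \<in> S. f q \<in> U})" for K by blast
  show ?thesis unfolding istopology_def i u by auto
qed

end

theory Submission
  imports Defs "HOL-Library.Function_Algebras" "Jordan_Normal_Form.Jordan_Normal_Form_Existence"
begin

text \<open>
  Closure of the open part is contained in \<open>Jt = 0\<close>: if \<open>It\<close> alone generates \<open>C^M2\<close> under
  \<open>Xt, Yt\<close> and \<open>[Xt, Yt] + It Jt = 0\<close>, then \<open>Jt Xt^a Yt^b It = tr (Xt^a Yt^b [Yt, Xt])\<close>, and
  by induction on \<open>a + b\<close> the trace identity \<open>tr (Xt^a [Yt^(b+1), Xt]) = 0\<close> expands into
  \<open>b + 1\<close> copies of \<open>Jt Xt^a Yt^b It\<close> (the induction hypothesis lets \<open>Yt\<close> move past \<open>Xt\<close>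
  on shorter words), so all these vanish and \<open>Jt = 0\<close>. The condition
  \<open>Jt = 0\<close> is closed and invariant under the group, hence defines a closed set of the quotient.

  Conversely, if \<open>Jt = 0\<close> then \<open>Xt\<close> and \<open>Yt\<close> commute. The Jordan form of \<open>Xt\<close> provides
  \<open>Z\<close> commuting with \<open>Xt\<close> and a vector \<open>w\<close> cyclic for \<open>(Xt, Z)\<close> (take \<open>Z\<close> diagonal,
  constant on each Jordan block with distinct values, and \<open>w\<close> the sum of the last basis
  vectors of the blocks). The path \<open>Yt + t Z\<close>, \<open>It + t w\<close> preserves the moment map equation,
  and for small \<open>t \<noteq> 0\<close> the new \<open>It\<close> is cyclic: up to the scalar \<open>s = 1/t\<close> the data are
  \<open>(Z + s Yt, w + s It)\<close>, whose cyclicity follows from the non-vanishing of a determinant that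
  is a polynomial in \<open>s\<close> with value \<open>1\<close> at \<open>s = 0\<close>.
  So every point with \<open>Jt = 0\<close> is a limit of points of the open part.
\<close>

section \<open>Algebra of zero-padded matrices\<close>

definition mtrace :: "nat \<Rightarrow> cmat \<Rightarrow> complex" where
  "mtrace n A = (\<Sum>l<n. A l l)"

definition vdot :: "nat \<Rightarrow> cvec \<Rightarrow> cvec \<Rightarrow> complex" where
  "vdot n u v = (\<Sum>l<n. u l * v l)"

definition std_basis :: "nat \<Rightarrow> cvec" where
  "std_basis m = (\<lambda>i. if i = m then 1 else 0)"

primrec mpow :: "nat \<Rightarrow> cmat \<Rightarrow> nat \<Rightarrow> cmat" where
  "mpow n A 0 = id_mat n"
| "mpow n A (Suc k) = mmul n A (mpow n A k)"

lemma mmul_assoc: "mmul n (mmul n A B) C = mmul n A (mmul n B C)"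
proof (intro ext)
  fix i j
  have "mmul n (mmul n A B) C i j = (\<Sum>m<n. \<Sum>l<n. A i l * B l m * C m j)"
    by (simp add: mmul_def sum_distrib_right)
  also have "\<dots> = (\<Sum>l<n. \<Sum>m<n. A i l * B l m * C m j)"
    by (rule sum.swap)
  also have "\<dots> = mmul n A (mmul n B C) i j"
    by (simp add: mmul_def sum_distrib_left mult.assoc)
  finally show "mmul n (mmul n A B) C i j = mmul n A (mmul n B C) i j" .
qed

lemma mvec_mmul: "mvec n (mmul n A B) v = mvec n A (mvec n B v)"
proof (intro ext)
  fix i
  have "mvec n (mmul n A B) v i = (\<Sum>m<n. \<Sum>l<n. A i l * B l m * v m)"
    by (simp add: mmul_def mvec_def sum_distrib_right)
  also have "\<dots> = (\<Sum>l<n. \<Sum>m<n. A i l * B l m * v m)"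
    by (rule sum.swap)
  also have "\<dots> = mvec n A (mvec n B v) i"
    by (simp add: mvec_def sum_distrib_left mult.assoc)
  finally show "mvec n (mmul n A B) v i = mvec n A (mvec n B v) i" .
qed

lemma mmul_diff_left: "mmul n (A - B) C = mmul n A C - mmul n B C"
  by (intro ext) (simp add: mmul_def algebra_simps sum_subtractf)

lemma mmul_diff_right: "mmul n A (B - C) = mmul n A B - mmul n A C"
  by (intro ext) (simp add: mmul_def algebra_simps sum_subtractf)

lemma mmul_add_right: "mmul n A (B + C) = mmul n A B + mmul n A C"
  by (intro ext) (simp add: mmul_def algebra_simps sum.distrib)

lemma mvec_add: "mvec n A (\<lambda>i. v i + w i) = (\<lambda>i. mvec n A v i + mvec n A w i)"
  by (simp add: mvec_def algebra_simps sum.distrib)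

lemma mvec_smult: "mvec n A (\<lambda>i. c * v i) = (\<lambda>i. c * mvec n A v i)"
  by (simp add: mvec_def algebra_simps sum_distrib_left)

lemma mvec_zero: "mvec n A (\<lambda>i. 0) = (\<lambda>i. 0)"
  by (simp add: mvec_def)

lemma mmul_id_mat_left:
  assumes "is_mat m k A"
  shows "mmul m (id_mat m) A = A"
proof (intro ext)
  fix i j
  have "mmul m (id_mat m) A i j = (\<Sum>l<m. if l = i then A i j else 0)"
    unfolding mmul_def id_mat_def by (intro sum.cong) auto
  then show "mmul m (id_mat m) A i j = A i j"
    using assms by (cases "i < m") (auto simp: is_mat_def)
qed

lemma mmul_id_mat_right:
  assumes "is_mat k m A"
  shows "mmul m A (id_mat m) = A"
proof (intro ext)
  fix i j
  have "mmul m A (id_mat m) i j = (\<Sum>l<m. if l = j then A i j else 0)"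
    unfolding mmul_def id_mat_def by (intro sum.cong) auto
  then show "mmul m A (id_mat m) i j = A i j"
    using assms by (cases "j < m") (auto simp: is_mat_def)
qed

lemma mvec_id_mat:
  assumes "is_vec n v"
  shows "mvec n (id_mat n) v = v"
proof (intro ext)
  fix i
  have "mvec n (id_mat n) v i = (\<Sum>l<n. if l = i then v i else 0)"
    unfolding mvec_def id_mat_def by (intro sum.cong) auto
  then show "mvec n (id_mat n) v i = v i"
    using assms by (cases "i < n") (auto simp: is_vec_def)
qed

lemma mvec_mvec_id_mat: "mvec n A (mvec n (id_mat n) v) = mvec n A v"
proof (intro ext)
  fix i
  have "mvec n (id_mat n) v l = v l" if "l < n" for l
  proof -
    have "mvec n (id_mat n) v l = (\<Sum>k<n. if k = l then v l else 0)"
      unfolding mvec_def id_mat_def by (intro sum.cong) auto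
    then show ?thesis using that by simp
  qed
  then show "mvec n A (mvec n (id_mat n) v) i = mvec n A v i"
    by (simp add: mvec_def)
qed

lemma is_mat_mmul: "is_mat n n A \<Longrightarrow> is_mat n n B \<Longrightarrow> is_mat n n (mmul n A B)"
  by (auto simp: is_mat_def mmul_def)

lemma is_mat_id_mat: "is_mat n n (id_mat n)"
  by (auto simp: is_mat_def id_mat_def)

lemma is_mat_mpow: "is_mat n n A \<Longrightarrow> is_mat n n (mpow n A k)"
  by (induct k) (auto simp: is_mat_id_mat is_mat_mmul)

lemma is_vec_mvec: "is_mat n n A \<Longrightarrow> is_vec n (mvec n A v)"
  by (auto simp: is_vec_def is_mat_def mvec_def)

lemma mpow_commute: "is_mat n n A \<Longrightarrow> mmul n A (mpow n A k) = mmul n (mpow n A k) A"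
proof (induct k)
  case 0
  then show ?case by (simp add: mmul_id_mat_left mmul_id_mat_right)
next
  case (Suc k)
  then show ?case by (simp add: mmul_assoc[symmetric])
qed

lemma mtrace_mmul_commute: "mtrace n (mmul n A B) = mtrace n (mmul n B A)"
proof -
  have "mtrace n (mmul n A B) = (\<Sum>l<n. \<Sum>m<n. A l m * B m l)"
    by (simp add: mtrace_def mmul_def)
  also have "\<dots> = (\<Sum>m<n. \<Sum>l<n. A l m * B m l)"
    by (rule sum.swap)
  also have "\<dots> = mtrace n (mmul n B A)"
    by (simp add: mtrace_def mmul_def mult.commute)
  finally show ?thesis .
qed

lemma mtrace_diff: "mtrace n (A - B) = mtrace n A - mtrace n B"
  by (simp add: mtrace_def sum_subtractf)

lemma mtrace_add: "mtrace n (A + B) = mtrace n A + mtrace n B"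
  by (simp add: mtrace_def sum.distrib)

section \<open>Subspaces generated under two matrices\<close>

lemma gen_space_mono:
  assumes "G \<subseteq> H"
  shows "gen_space n A B G \<subseteq> gen_space n A B H"
proof
  fix u
  assume "u \<in> gen_space n A B G"
  then show "u \<in> gen_space n A B H"
    by induct (use assms in \<open>auto intro: gen_space.intros\<close>)
qed

lemma gen_space_is_vec:
  assumes "is_mat n n A" "is_mat n n B" "\<And>g. g \<in> G \<Longrightarrow> is_vec n g"
  shows "u \<in> gen_space n A B G \<Longrightarrow> is_vec n u"
proof (induct rule: gen_space.induct)
  case (gen_X v)
  show ?case by (rule is_vec_mvec[OF assms(1)])
next
  case (gen_Y v)
  show ?case by (rule is_vec_mvec[OF assms(2)])
qed (use assms(3) in \<open>auto simp: is_vec_def\<close>)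

lemma gen_space_sum:
  "finite F \<Longrightarrow> (\<And>r. r \<in> F \<Longrightarrow> f r \<in> gen_space n A B G) \<Longrightarrow>
    (\<lambda>i. \<Sum>r\<in>F. f r i) \<in> gen_space n A B G"
  by (induct F rule: finite_induct) (auto intro: gen_space.intros)

lemma gen_space_scale:
  "u \<in> gen_space n A (\<lambda>i j. c * B i j) {\<lambda>i. c * b i} \<Longrightarrow> u \<in> gen_space n A B {b}"
proof (induct rule: gen_space.induct)
  case (gen_Y v)
  have "mvec n (\<lambda>i j. c * B i j) v = (\<lambda>i. c * mvec n B v i)"
    by (simp add: mvec_def sum_distrib_left mult.assoc)
  then show ?case
    using gen_Y by (auto intro: gen_space.intros)
qed (auto intro: gen_space.intros)

lemma gen_space_conj:
  assumes QP: "mmul n Q P = id_mat n"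
    and "X = mmul n (mmul n P A) Q" and "Z = mmul n (mmul n P B) Q"
  shows "v \<in> gen_space n A B G \<Longrightarrow> mvec n P v \<in> gen_space n X Z (mvec n P ` G)"
proof (induct rule: gen_space.induct)
  case (gen_X v)
  have "mvec n X (mvec n P v) = mvec n P (mvec n A (mvec n (mmul n Q P) v))"
    using assms(2) by (simp add: mvec_mmul)
  then show ?case
    using gen_space.gen_X[OF gen_X(2)] by (simp add: QP mvec_mvec_id_mat)
next
  case (gen_Y v)
  have "mvec n Z (mvec n P v) = mvec n P (mvec n B (mvec n (mmul n Q P) v))"
    using assms(3) by (simp add: mvec_mmul)
  then show ?case
    using gen_space.gen_Y[OF gen_Y(2)] by (simp add: QP mvec_mvec_id_mat)
qed (auto simp: mvec_zero mvec_add mvec_smult intro: gen_space.intros)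

section \<open>A rank-one moment map with cyclic \<open>I\<close> forces \<open>J = 0\<close>\<close>

lemma mtrace_mmul_commutator_mpow:
  assumes X: "is_mat n n X" and Y: "is_mat n n Y"
  defines "C \<equiv> mmul n Y X - mmul n X Y"
  shows "mtrace n (mmul n M (mmul n (mpow n Y b) X - mmul n X (mpow n Y b))) =
    (\<Sum>k<b. mtrace n (mmul n (mmul n (mmul n M (mpow n Y k)) C) (mpow n Y (b - Suc k))))"
proof (induct b arbitrary: M)
  case 0
  have "mmul n (id_mat n) X - mmul n X (id_mat n) = 0"
    using X by (simp add: mmul_id_mat_left mmul_id_mat_right)
  then show ?case by (simp add: mtrace_def mmul_def)
next
  case (Suc b)
  let ?P = "mpow n Y b"
  have C: "is_mat n n C"
    using X Y by (auto simp: C_def is_mat_def mmul_def)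
  have "mmul n (mpow n Y (Suc b)) X - mmul n X (mpow n Y (Suc b)) =
      mmul n Y (mmul n ?P X - mmul n X ?P) + mmul n C ?P"
    by (simp add: C_def mmul_diff_right mmul_diff_left mmul_assoc)
  then have "mtrace n (mmul n M (mmul n (mpow n Y (Suc b)) X - mmul n X (mpow n Y (Suc b)))) =
      mtrace n (mmul n (mmul n M Y) (mmul n ?P X - mmul n X ?P)) + mtrace n (mmul n (mmul n M C) ?P)"
    by (simp add: mmul_add_right mtrace_add mmul_assoc)
  also have "mtrace n (mmul n (mmul n M Y) (mmul n ?P X - mmul n X ?P)) =
      (\<Sum>k<b. mtrace n (mmul n (mmul n (mmul n M (mpow n Y (Suc k))) C) (mpow n Y (Suc b - Suc (Suc k)))))"
    unfolding Suc by (simp add: mmul_assoc)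
  also have "mtrace n (mmul n (mmul n M C) ?P) =
      mtrace n (mmul n (mmul n (mmul n M (mpow n Y 0)) C) (mpow n Y (Suc b - Suc 0)))"
    using C by (simp add: mmul_assoc mmul_id_mat_left)
  finally show ?case
    unfolding sum.lessThan_Suc_shift by (simp only: add.commute)
qed

lemma sum_mtrace_mpow_commutator:
  assumes X: "is_mat n n X" and Y: "is_mat n n Y"
  defines "C \<equiv> mmul n Y X - mmul n X Y"
  shows "(\<Sum>k<Suc b. mtrace n (mmul n (mmul n (mmul n (mpow n X a) (mpow n Y k)) C) (mpow n Y (b - k)))) = 0"
proof -
  let ?A = "mpow n X a" and ?B = "mpow n Y (Suc b)"
  have "mtrace n (mmul n ?A (mmul n ?B X)) = mtrace n (mmul n X (mmul n ?A ?B))"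
    by (subst mtrace_mmul_commute) (simp add: mmul_assoc)
  also have "\<dots> = mtrace n (mmul n ?A (mmul n X ?B))"
    by (simp add: mmul_assoc[symmetric] mpow_commute[OF X])
  finally have "mtrace n (mmul n ?A (mmul n ?B X - mmul n X ?B)) = 0"
    by (simp add: mmul_diff_right mtrace_diff)
  then show ?thesis
    unfolding mtrace_mmul_commutator_mpow[OF X Y] C_def by simp
qed

context
  fixes n :: nat and X Y :: cmat and iv jv :: cvec
  assumes X: "is_mat n n X" and Y: "is_mat n n Y" and iv: "is_vec n iv"
    and moment: "\<And>l m. mmul n X Y l m - mmul n Y X l m + iv l * jv m = 0"
begin

definition word :: "nat \<Rightarrow> nat \<Rightarrow> cvec" where
  "word a b = mvec n (mpow n X a) (mvec n (mpow n Y b) iv)"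

lemma word_Suc_left: "word (Suc a) b = mvec n X (word a b)"
  by (simp add: word_def mvec_mmul)

lemma mtrace_mmul_commutator: "mtrace n (mmul n M (mmul n Y X - mmul n X Y)) = vdot n jv (mvec n M iv)"
proof -
  have C: "mmul n Y X - mmul n X Y = (\<lambda>l m. iv l * jv m)"
    using moment by (intro ext) (simp add: algebra_simps eq_neg_iff_add_eq_0)
  show ?thesis
    unfolding C by (simp add: mtrace_def mmul_def vdot_def mvec_def sum_distrib_left algebra_simps)
qed

lemma mvec_commute_if_vdot_eq_0:
  assumes "vdot n jv w = 0"
  shows "mvec n X (mvec n Y w) = mvec n Y (mvec n X w)"
proof (intro ext)
  fix i
  have XY: "mmul n X Y i m = mmul n Y X i m - iv i * jv m" for m
    using moment[of i m] by (simp add: algebra_simps eq_diff_eq)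
  have "mvec n X (mvec n Y w) i = mvec n (mmul n X Y) w i"
    by (simp add: mvec_mmul)
  also have "\<dots> = (\<Sum>m<n. (mmul n Y X i m - iv i * jv m) * w m)"
    by (simp add: mvec_def XY)
  also have "\<dots> = mvec n (mmul n Y X) w i - iv i * vdot n jv w"
    by (simp add: mvec_def vdot_def algebra_simps sum_subtractf sum_distrib_left)
  finally show "mvec n X (mvec n Y w) i = mvec n Y (mvec n X w) i"
    using assms by (simp add: mvec_mmul)
qed

text \<open>Below total degree \<open>l\<close>, orthogonality of the words to \<open>jv\<close> lets \<open>Y\<close> move past \<open>X\<close>.\<close>

lemma mvec_Y_word_below:
  assumes below: "\<And>a b. a + b < l \<Longrightarrow> vdot n jv (word a b) = 0" and "a + d \<le> l"
  shows "mvec n Y (word a d) = word a (Suc d)"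
  using \<open>a + d \<le> l\<close>
proof (induct a)
  case 0
  show ?case using is_vec_mvec[OF Y]
    by (simp add: word_def mvec_mmul mvec_mvec_id_mat mvec_id_mat)
next
  case (Suc a)
  have "vdot n jv (word a d) = 0"
    using below Suc.prems by simp
  then have "mvec n Y (mvec n X (word a d)) = mvec n X (mvec n Y (word a d))"
    by (simp add: mvec_commute_if_vdot_eq_0)
  then show ?case
    using Suc by (simp add: word_Suc_left)
qed

lemma mpow_Y_word_below:
  assumes below: "\<And>a b. a + b < l \<Longrightarrow> vdot n jv (word a b) = 0" and "a + c + d \<le> Suc l"
  shows "mvec n (mpow n Y c) (word a d) = word a (c + d)"
  using \<open>a + c + d \<le> Suc l\<close>
proof (induct c)
  case 0
  have "is_vec n (word a d)"
    unfolding word_def by (rule is_vec_mvec[OF is_mat_mpow[OF X]])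
  then show ?case by (simp add: mvec_id_mat)
next
  case (Suc c)
  then show ?case
    using mvec_Y_word_below[where l = l and a = a and d = "c + d", OF below] by (simp add: mvec_mmul)
qed

lemma vdot_word: "vdot n jv (word a b) = 0"
proof (induct "a + b" arbitrary: a b rule: less_induct)
  case less
  let ?C = "mmul n Y X - mmul n X Y"
  have below: "\<And>a' b'. a' + b' < a + b \<Longrightarrow> vdot n jv (word a' b') = 0"
    using less by blast
  have "mtrace n (mmul n (mmul n (mmul n (mpow n X a) (mpow n Y k)) ?C) (mpow n Y (b - k))) =
      vdot n jv (word a b)" if "k < Suc b" for k
  proof -
    have "mtrace n (mmul n (mmul n (mmul n (mpow n X a) (mpow n Y k)) ?C) (mpow n Y (b - k))) =
        mtrace n (mmul n (mmul n (mpow n Y (b - k)) (mmul n (mpow n X a) (mpow n Y k))) ?C)"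
      by (subst mtrace_mmul_commute) (simp add: mmul_assoc)
    also have "\<dots> = vdot n jv (mvec n (mpow n Y (b - k)) (word a k))"
      by (simp add: mtrace_mmul_commutator mvec_mmul word_def)
    also have "\<dots> = vdot n jv (word a b)"
      using mpow_Y_word_below[where l = "a + b" and a = a and c = "b - k" and d = k, OF below] that
      by simp
    finally show ?thesis .
  qed
  then have "of_nat (Suc b) * vdot n jv (word a b) = 0"
    using sum_mtrace_mpow_commutator[OF X Y, of a b] by simp
  then show ?case by (simp only: mult_eq_0_iff of_nat_eq_0_iff) simp
qed

lemma word_Suc_right: "mvec n Y (word a b) = word a (Suc b)"
  using mvec_Y_word_below[of "a + b" a b] vdot_word by simp

inductive_set word_span :: "cvec set" where
  word: "word a b \<in> word_span"
| zero: "(\<lambda>i. 0) \<in> word_span"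
| add: "v \<in> word_span \<Longrightarrow> w \<in> word_span \<Longrightarrow> (\<lambda>i. v i + w i) \<in> word_span"
| smult: "v \<in> word_span \<Longrightarrow> (\<lambda>i. c * v i) \<in> word_span"

lemma gen_space_subset_word_span:
  assumes G: "\<And>g. g \<in> G \<Longrightarrow> \<exists>c. g = (\<lambda>i. c * iv i)"
  shows "gen_space n X Y G \<subseteq> word_span"
proof
  have X_closed: "mvec n X u \<in> word_span" and Y_closed: "mvec n Y u \<in> word_span"
    if "u \<in> word_span" for u
    using that
    by (induct rule: word_span.induct)
      (auto simp: mvec_add mvec_smult mvec_zero word_Suc_left[symmetric] word_Suc_right
        intro: word_span.intros)
  fix v
  assume "v \<in> gen_space n X Y G"
  then show "v \<in> word_span"
  proof (induct rule: gen_space.induct)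
    case (gen_base v)
    then obtain c where "v = (\<lambda>i. c * iv i)"
      using G by blast
    moreover have "word 0 0 = iv"
      using iv by (simp add: word_def mvec_id_mat)
    ultimately show ?case
      by (metis word_span.word word_span.smult)
  qed (auto intro: word_span.intros X_closed Y_closed)
qed

lemma vdot_word_span: "v \<in> word_span \<Longrightarrow> vdot n jv v = 0"
proof (induct rule: word_span.induct)
  case (word a b)
  show ?case by (rule vdot_word)
qed (auto simp: vdot_def algebra_simps sum.distrib sum_distrib_left[symmetric])

end

theorem cyclic_I_imp_J_eq_0:
  assumes X: "is_mat n n X" and Y: "is_mat n n Y" and I: "is_mat n 1 I" and J: "is_mat 1 n J"
    and moment: "(\<lambda>i j. mmul n X Y i j - mmul n Y X i j + mmul 1 I J i j) = Defs.zero_mat"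
    and cyclic: "{v. is_vec n v} \<subseteq> gen_space n X Y (img 1 I)"
  shows "J = Defs.zero_mat"
proof -
  let ?iv = "\<lambda>l. I l 0" and ?jv = "\<lambda>m. J 0 m"
  have iv: "is_vec n ?iv"
    using I by (simp add: is_vec_def is_mat_def)
  have moment': "mmul n X Y l m - mmul n Y X l m + ?iv l * ?jv m = 0" for l m
    using fun_cong[OF fun_cong[OF moment, of l], of m] by (simp add: mmul_def Defs.zero_mat_def)
  have "\<exists>c. g = (\<lambda>i. c * ?iv i)" if "g \<in> img 1 I" for g
    using that by (auto simp: img_def mvec_def mult.commute)
  then have span: "gen_space n X Y (img 1 I) \<subseteq> word_span n X Y ?iv"
    by (rule gen_space_subset_word_span[OF X Y iv moment'])
  have "J 0 m = 0" if "m < n" for m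
  proof -
    have "is_vec n (std_basis m)"
      using that by (simp add: is_vec_def std_basis_def)
    then have "std_basis m \<in> word_span n X Y ?iv"
      using cyclic span by blast
    then have "vdot n ?jv (std_basis m) = 0"
      by (rule vdot_word_span[OF X Y iv moment'])
    then show ?thesis
      using that by (simp add: vdot_def std_basis_def if_distrib sum.delta cong: if_cong)
  qed
  then show ?thesis
    using J unfolding Defs.zero_mat_def is_mat_def by (metis One_nat_def less_one not_le)
qed

section \<open>A commuting partner with a cyclic vector\<close>

definition jordan_shaped :: "nat \<Rightarrow> cmat \<Rightarrow> bool" where
  "jordan_shaped n J \<longleftrightarrow> is_mat n n J \<and>
     (\<forall>i j. J i j \<noteq> 0 \<longrightarrow> j = i \<or> (j = Suc i \<and> J i j = 1 \<and> J i i = J j j))"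

text \<open>\<open>block_index J i\<close> counts the Jordan blocks of \<open>J\<close> that end before index \<open>i\<close>.\<close>

primrec block_index :: "cmat \<Rightarrow> nat \<Rightarrow> nat" where
  "block_index J 0 = 0"
| "block_index J (Suc i) = block_index J i + (if J i (Suc i) = 1 then 0 else 1)"

definition block_diag :: "nat \<Rightarrow> cmat \<Rightarrow> cmat" where
  "block_diag n J = (\<lambda>i j. if i = j \<and> i < n then of_nat (block_index J i) else 0)"

definition block_ends :: "nat \<Rightarrow> cmat \<Rightarrow> cvec" where
  "block_ends n J = (\<lambda>i. if i < n \<and> J i (Suc i) \<noteq> 1 then 1 else 0)"

lemma jordan_shaped_is_mat: "jordan_shaped n J \<Longrightarrow> is_mat n n J"
  by (simp add: jordan_shaped_def)

lemma block_index_mono: "i \<le> j \<Longrightarrow> block_index J i \<le> block_index J j"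
  by (induct j) (auto simp: le_Suc_eq)

lemma block_index_less: "i < m \<Longrightarrow> J i (Suc i) \<noteq> 1 \<Longrightarrow> block_index J i < block_index J m"
  using block_index_mono[of "Suc i" m J] by simp

lemma is_mat_block_diag: "is_mat n n (block_diag n J)"
  by (auto simp: is_mat_def block_diag_def)

lemma mvec_block_diag:
  assumes "is_vec n v"
  shows "mvec n (block_diag n J) v = (\<lambda>i. of_nat (block_index J i) * v i)"
proof (intro ext)
  fix i
  have "mvec n (block_diag n J) v i = (\<Sum>l<n. if l = i then of_nat (block_index J i) * v i else 0)"
    unfolding mvec_def block_diag_def by (intro sum.cong) auto
  then show "mvec n (block_diag n J) v i = of_nat (block_index J i) * v i"
    using assms by (cases "i < n") (auto simp: is_vec_def)
qed

lemma jordan_shaped_commute_block_diag: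
  assumes J: "jordan_shaped n J"
  shows "mmul n J (block_diag n J) = mmul n (block_diag n J) J"
proof (intro ext)
  fix i j
  have commute: "J i j * of_nat (block_index J j) = of_nat (block_index J i) * J i j"
  proof (cases "J i j = 0")
    case False
    then have "j = i \<or> (j = Suc i \<and> J i j = 1)"
      using J by (auto simp: jordan_shaped_def)
    then show ?thesis by auto
  qed simp
  have "mmul n J (block_diag n J) i j = (\<Sum>l<n. if l = j then J i j * of_nat (block_index J j) else 0)"
    unfolding mmul_def block_diag_def by (intro sum.cong) auto
  moreover have "mmul n (block_diag n J) J i j = (\<Sum>l<n. if l = i then of_nat (block_index J i) * J i j else 0)"
    unfolding mmul_def block_diag_def by (intro sum.cong) auto
  ultimately show "mmul n J (block_diag n J) i j = mmul n (block_diag n J) J i j"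
    using commute jordan_shaped_is_mat[OF J] by (auto simp: is_mat_def)
qed

context
  fixes n :: nat and J :: cmat
  assumes J: "jordan_shaped n J"
begin

abbreviation block_space :: "cvec set" where
  "block_space \<equiv> gen_space n J (block_diag n J) {block_ends n J}"

lemma is_vec_block_space: "v \<in> block_space \<Longrightarrow> is_vec n v"
  by (rule gen_space_is_vec[OF jordan_shaped_is_mat[OF J] is_mat_block_diag]) (auto simp: block_ends_def is_vec_def)

lemma block_space_poly_block_diag:
  assumes v: "v \<in> block_space" and "finite F"
  shows "(\<lambda>i. (\<Prod>c\<in>F. of_nat (block_index J i) - c) * v i) \<in> block_space"
  using \<open>finite F\<close>
proof (induct F rule: finite_induct)
  case empty
  then show ?case using v by simp
next
  case (insert c F)
  let ?u = "\<lambda>i. (\<Prod>c\<in>F. of_nat (block_index J i) - c) * v i"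
  have "is_vec n ?u"
    using insert(3) by (rule is_vec_block_space)
  then have "(\<lambda>i. mvec n (block_diag n J) ?u i + (- c) * ?u i) =
      (\<lambda>i. (\<Prod>c\<in>insert c F. of_nat (block_index J i) - c) * v i)"
    using insert(1,2) by (simp add: mvec_block_diag algebra_simps)
  moreover have "(\<lambda>i. mvec n (block_diag n J) ?u i + (- c) * ?u i) \<in> block_space"
    using insert(3) by (intro gen_space.gen_add gen_space.gen_smult gen_space.gen_Y)
  ultimately show ?case by simp
qed

lemma block_projection_in_block_space:
  "(\<lambda>i. if block_index J i = k then block_ends n J i else 0) \<in> block_space"
proof -
  \<comment> \<open>Lagrange interpolation: a polynomial in \<open>block_diag n J\<close> vanishing at all other block indices\<close>
  let ?F = "(of_nat ` ({0..block_index J n} - {k})) :: complex set"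
  let ?p = "\<lambda>i. \<Prod>c\<in>?F. of_nat (block_index J i) - c"
  let ?\<kappa> = "\<Prod>c\<in>?F. of_nat k - c"
  have "?\<kappa> \<noteq> 0"
    by (auto simp: prod_zero_iff)
  have "(\<lambda>i. inverse ?\<kappa> * (?p i * block_ends n J i)) \<in> block_space"
    by (intro gen_space.gen_smult block_space_poly_block_diag gen_space.gen_base) auto
  moreover have "inverse ?\<kappa> * (?p i * block_ends n J i) = (if block_index J i = k then block_ends n J i else 0)"
    for i
  proof (cases "i < n \<and> block_index J i \<noteq> k")
    case True
    then have "of_nat (block_index J i) \<in> ?F"
      using block_index_mono[of i n J] by auto
    then have "?p i = 0"
      by (auto simp: prod_zero_iff)
    then show ?thesis using True by simp
  next
    case False
    then show ?thesis
      using \<open>?\<kappa> \<noteq> 0\<close> by (auto simp: block_ends_def)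
  qed
  ultimately show ?thesis by simp
qed

lemma std_basis_in_block_space: "m < n \<Longrightarrow> std_basis m \<in> block_space"
proof (induct "n - m" arbitrary: m rule: less_induct)
  case less
  show ?case
  proof (cases "J m (Suc m) = 1")
    case True
    \<comment> \<open>inside a block, \<open>J - J (Suc m) (Suc m)\<close> shifts \<open>std_basis (Suc m)\<close> to \<open>std_basis m\<close>\<close>
    have "Suc m < n"
      using True jordan_shaped_is_mat[OF J] by (metis is_mat_def not_le one_neq_zero)
    then have "std_basis (Suc m) \<in> block_space"
      using less by simp
    then have "(\<lambda>i. mvec n J (std_basis (Suc m)) i + (- J (Suc m) (Suc m)) * std_basis (Suc m) i) \<in> block_space"
      by (intro gen_space.gen_add gen_space.gen_smult gen_space.gen_X)
    moreover have "mvec n J (std_basis (Suc m)) i + (- J (Suc m) (Suc m)) * std_basis (Suc m) i = std_basis m i"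
      for i
    proof -
      have "mvec n J (std_basis (Suc m)) i = (\<Sum>l<n. if l = Suc m then J i (Suc m) else 0)"
        unfolding mvec_def std_basis_def by (intro sum.cong) auto
      then have "mvec n J (std_basis (Suc m)) i = J i (Suc m)"
        using \<open>Suc m < n\<close> by simp
      moreover have "J i (Suc m) \<noteq> 0 \<Longrightarrow> i = m \<or> i = Suc m"
        using J by (auto simp: jordan_shaped_def)
      moreover have "J m m = J (Suc m) (Suc m)"
        using J True unfolding jordan_shaped_def by (metis one_neq_zero)
      ultimately show ?thesis
        using True by (auto simp: std_basis_def)
    qed
    ultimately show ?thesis by simp
  next
    case False
    \<comment> \<open>\<open>m\<close> ends a block, and it is the only block end with its block index\<close>
    have "(if block_index J i = block_index J m then block_ends n J i else 0) = std_basis m i" for i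
      using block_index_less[of i m J] block_index_less[of m i J] False less.prems
      by (cases i m rule: linorder_cases) (auto simp: block_ends_def std_basis_def)
    then show ?thesis
      using block_projection_in_block_space[of "block_index J m"] by simp
  qed
qed

lemma block_ends_cyclic: "{v. is_vec n v} \<subseteq> block_space"
proof
  fix v
  assume "v \<in> {v. is_vec n v}"
  then have "(\<lambda>i. \<Sum>m<n. v m * std_basis m i) = v"
    by (auto simp: is_vec_def std_basis_def if_distrib sum.delta cong: if_cong)
  moreover have "(\<lambda>i. \<Sum>m<n. v m * std_basis m i) \<in> block_space"
    by (intro gen_space_sum gen_space.gen_smult std_basis_in_block_space) auto
  ultimately show "v \<in> block_space" by simp
qed

end

definition of_mat :: "complex Matrix.mat \<Rightarrow> cmat" where
  "of_mat A = (\<lambda>i j. if i < dim_row A \<and> j < dim_col A then A $$ (i, j) else 0)"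

lemma is_mat_of_mat: "A \<in> carrier_mat n n \<Longrightarrow> is_mat n n (of_mat A)"
  by (auto simp: of_mat_def is_mat_def)

lemma of_mat_mat: "is_mat n n X \<Longrightarrow> of_mat (Matrix.mat n n (\<lambda>(i, j). X i j)) = X"
  by (intro ext) (auto simp: of_mat_def is_mat_def)

lemma of_mat_one: "of_mat (1\<^sub>m n) = id_mat n"
  by (intro ext) (auto simp: of_mat_def id_mat_def)

lemma of_mat_mult:
  assumes A: "A \<in> carrier_mat n n" and B: "B \<in> carrier_mat n n"
  shows "of_mat (A * B) = mmul n (of_mat A) (of_mat B)"
proof (intro ext)
  fix i j
  show "of_mat (A * B) i j = mmul n (of_mat A) (of_mat B) i j"
  proof (cases "i < n \<and> j < n")
    case True
    then have "of_mat (A * B) i j = (\<Sum>l\<in>{0..<n}. A $$ (i, l) * B $$ (l, j))"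
      using A B by (simp add: of_mat_def scalar_prod_def)
    then show ?thesis
      using A B True by (simp add: mmul_def of_mat_def atLeast0LessThan)
  next
    case False
    then show ?thesis using A B by (auto simp: mmul_def of_mat_def)
  qed
qed

lemma of_mat_four_block:
  assumes "A \<in> carrier_mat a a" "D \<in> carrier_mat d d"
  shows "of_mat (four_block_mat A (0\<^sub>m a d) (0\<^sub>m d a) D) i j =
    (if i < a then if j < a then of_mat A i j else 0 else if j < a then 0 else of_mat D (i - a) (j - a))"
  using assms by (auto simp: of_mat_def)

lemma jordan_shaped_four_block:
  assumes A: "A \<in> carrier_mat a a" "jordan_shaped a (of_mat A)"
    and D: "D \<in> carrier_mat d d" "jordan_shaped d (of_mat D)"
  shows "jordan_shaped (a + d) (of_mat (four_block_mat A (0\<^sub>m a d) (0\<^sub>m d a) D))"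
proof -
  let ?M = "of_mat (four_block_mat A (0\<^sub>m a d) (0\<^sub>m d a) D)"
  note M = of_mat_four_block[OF A(1) D(1)]
  have "j = i \<or> (j = Suc i \<and> ?M i j = 1 \<and> ?M i i = ?M j j)" if nz: "?M i j \<noteq> 0" for i j
  proof (cases "i < a")
    case True
    then show ?thesis
      using nz A(2) unfolding M by (auto simp: jordan_shaped_def split: if_splits)
  next
    case False
    then have "\<not> j < a" "of_mat D (i - a) (j - a) \<noteq> 0"
      using nz unfolding M by (auto split: if_splits)
    then have "j - a = i - a \<or> j - a = Suc (i - a) \<and> of_mat D (i - a) (j - a) = 1 \<and>
        of_mat D (i - a) (i - a) = of_mat D (j - a) (j - a)"
      using D(2) by (auto simp: jordan_shaped_def)
    then show ?thesis
      using False \<open>\<not> j < a\<close> unfolding M by (auto simp: Suc_diff_le)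
  qed
  moreover have "is_mat (a + d) (a + d) ?M"
    using A D unfolding M by (auto simp: is_mat_def jordan_shaped_def)
  ultimately show ?thesis
    unfolding jordan_shaped_def by blast
qed

lemma jordan_shaped_jordan_matrix:
  "jordan_shaped (sum_list (map fst n_as)) (of_mat (jordan_matrix n_as))"
proof (induct n_as)
  case Nil
  then show ?case
    by (simp add: jordan_shaped_def is_mat_def of_mat_def)
next
  case (Cons ka n_as)
  obtain k a where ka: "ka = (k, a)" by force
  have "jordan_shaped k (of_mat (jordan_block k a))"
    by (auto simp: jordan_shaped_def is_mat_def of_mat_def)
  then show ?case
    using jordan_shaped_four_block[OF _ _ _ Cons] by (simp add: ka jordan_matrix_Cons)
qed

lemma padded_jordan_form:
  assumes X: "is_mat n n X"
  shows "\<exists>P Q J. is_mat n n P \<and> is_mat n n Q \<and> jordan_shaped n J \<and>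
    mmul n P Q = id_mat n \<and> mmul n Q P = id_mat n \<and> X = mmul n (mmul n P J) Q"
proof -
  let ?A = "Matrix.mat n n (\<lambda>(i, j). X i j) :: complex Matrix.mat"
  have A: "?A \<in> carrier_mat n n" by simp
  obtain as where "char_poly ?A = (\<Prod>a \<leftarrow> as. [:- a, 1:])"
    using char_poly_factorized[OF A] by blast
  then obtain n_as where "jordan_nf ?A n_as"
    using jordan_nf_exists[OF A] by blast
  then obtain P Q where "similar_mat_wit ?A (jordan_matrix n_as) P Q"
    unfolding jordan_nf_def similar_mat_def by blast
  then have carrier: "jordan_matrix n_as \<in> carrier_mat n n" "P \<in> carrier_mat n n" "Q \<in> carrier_mat n n"
    and inverse: "P * Q = 1\<^sub>m n" "Q * P = 1\<^sub>m n" and conj: "?A = P * jordan_matrix n_as * Q"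
    unfolding similar_mat_wit_def Let_def by auto
  have "X = mmul n (mmul n (of_mat P) (of_mat (jordan_matrix n_as))) (of_mat Q)"
    using of_mat_mat[OF X] carrier unfolding conj by (simp add: of_mat_mult mmul_assoc)
  moreover have "jordan_shaped n (of_mat (jordan_matrix n_as))"
    using jordan_shaped_jordan_matrix[of n_as] carrier(1) by (metis carrier_matD(1) jordan_matrix_dim(1))
  moreover have "mmul n (of_mat P) (of_mat Q) = id_mat n" "mmul n (of_mat Q) (of_mat P) = id_mat n"
    using carrier inverse by (simp_all flip: of_mat_mult of_mat_one)
  ultimately show ?thesis
    using carrier is_mat_of_mat by blast
qed

lemma exists_commuting_cyclic_partner:
  assumes X: "is_mat n n X"
  shows "\<exists>Z w. is_mat n n Z \<and> is_vec n w \<and> mmul n X Z = mmul n Z X \<and>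
    {v. is_vec n v} \<subseteq> gen_space n X Z {w}"
proof -
  obtain P Q J where P: "is_mat n n P" and Q: "is_mat n n Q" and J: "jordan_shaped n J"
    and PQ: "mmul n P Q = id_mat n" and QP: "mmul n Q P = id_mat n"
    and XJ: "X = mmul n (mmul n P J) Q"
    using padded_jordan_form[OF X] by blast
  let ?D = "block_diag n J"
  let ?Z = "mmul n (mmul n P ?D) Q"
  have conj_mmul: "mmul n (mmul n (mmul n P A) Q) (mmul n (mmul n P B) Q) = mmul n (mmul n P (mmul n A B)) Q"
    if "is_mat n n B" for A B
  proof -
    have "mmul n (mmul n (mmul n P A) Q) (mmul n (mmul n P B) Q) =
        mmul n (mmul n P (mmul n A (mmul n (mmul n Q P) B))) Q"
      by (simp add: mmul_assoc)
    then show ?thesis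
      using that by (simp add: QP mmul_id_mat_left)
  qed
  have "mmul n X ?Z = mmul n (mmul n P (mmul n J ?D)) Q"
    unfolding XJ by (rule conj_mmul[OF is_mat_block_diag])
  also have "\<dots> = mmul n (mmul n P (mmul n ?D J)) Q"
    by (simp add: jordan_shaped_commute_block_diag[OF J])
  also have "\<dots> = mmul n ?Z X"
    unfolding XJ by (rule conj_mmul[OF jordan_shaped_is_mat[OF J], symmetric])
  finally have "mmul n X ?Z = mmul n ?Z X" .
  moreover have "{v. is_vec n v} \<subseteq> gen_space n X ?Z {mvec n P (block_ends n J)}"
  proof
    fix v
    assume v: "v \<in> {v. is_vec n v}"
    have "mvec n Q v \<in> block_space n J"
      using block_ends_cyclic[OF J] is_vec_mvec[OF Q] by blast
    from gen_space_conj[OF QP XJ refl this]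
    have "mvec n P (mvec n Q v) \<in> gen_space n X ?Z {mvec n P (block_ends n J)}"
      by simp
    moreover have "mvec n P (mvec n Q v) = v"
      using v by (simp add: mvec_mmul[symmetric] PQ mvec_id_mat)
    ultimately show "v \<in> gen_space n X ?Z {mvec n P (block_ends n J)}"
      by simp
  qed
  moreover have "is_mat n n ?Z"
    using P Q by (intro is_mat_mmul is_mat_block_diag)
  ultimately show ?thesis
    using is_vec_mvec[OF P] by blast
qed

section \<open>Cyclicity survives a generic perturbation\<close>

definition polyfun :: "(complex \<Rightarrow> complex) \<Rightarrow> bool" where
  "polyfun f \<longleftrightarrow> (\<exists>p. \<forall>s. f s = poly p s)"

lemma polyfun_const: "polyfun (\<lambda>s. c)"
  unfolding polyfun_def by (intro exI[of _ "[:c:]"]) simp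

lemma polyfun_ident: "polyfun (\<lambda>s. s)"
  unfolding polyfun_def by (intro exI[of _ "[:0, 1:]"]) simp

lemma polyfun_add: "polyfun f \<Longrightarrow> polyfun g \<Longrightarrow> polyfun (\<lambda>s. f s + g s)"
  unfolding polyfun_def by (metis poly_add)

lemma polyfun_mult: "polyfun f \<Longrightarrow> polyfun g \<Longrightarrow> polyfun (\<lambda>s. f s * g s)"
  unfolding polyfun_def by (metis poly_mult)

lemma polyfun_sum: "finite F \<Longrightarrow> (\<And>r. r \<in> F \<Longrightarrow> polyfun (f r)) \<Longrightarrow> polyfun (\<lambda>s. \<Sum>r\<in>F. f r s)"
  by (induct F rule: finite_induct) (auto intro: polyfun_add polyfun_const)

lemma polyfun_prod: "finite F \<Longrightarrow> (\<And>r. r \<in> F \<Longrightarrow> polyfun (f r)) \<Longrightarrow> polyfun (\<lambda>s. \<Prod>r\<in>F. f r s)"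
  by (induct F rule: finite_induct) (auto intro: polyfun_mult polyfun_const)

lemma polyfun_det:
  assumes "\<And>i j. polyfun (\<lambda>s. f s i j)"
  shows "polyfun (\<lambda>s. Determinant.det (Matrix.mat n n (\<lambda>(i, j). f s i j)))"
proof -
  have "Determinant.det (Matrix.mat n n (\<lambda>(i, j). f s i j)) =
      (\<Sum>p\<in>{p. p permutes {0..<n}}. signof p * (\<Prod>i\<in>{0..<n}. f s i (p i)))" for s
    unfolding det_def'[OF mat_carrier]
    by (intro sum.cong refl arg_cong2[where f = "(*)"] prod.cong)
      (auto dest: permutes_in_image)
  moreover have "polyfun (\<lambda>s. \<Sum>p\<in>{p. p permutes {0..<n}}. signof p * (\<Prod>i\<in>{0..<n}. f s i (p i)))"
    by (intro polyfun_sum polyfun_mult polyfun_const polyfun_prod finite_permutations assms) auto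
  ultimately show ?thesis by simp
qed

lemma gen_space_if_det_ne_0:
  assumes U: "\<And>r. r < n \<Longrightarrow> U r \<in> gen_space n A B G" "\<And>r. is_vec n (U r)"
    and det: "Determinant.det (Matrix.mat n n (\<lambda>(i, r). U r i)) \<noteq> 0"
    and x: "is_vec n x"
  shows "x \<in> gen_space n A B G"
proof -
  define M where "M = Matrix.mat n n (\<lambda>(i, r). U r i)"
  have M: "M \<in> carrier_mat n n"
    by (simp add: M_def)
  let ?d = "Determinant.det M"
  let ?y = "adj_mat M *\<^sub>v vec n x"
  \<comment> \<open>Cramer's rule\<close>
  have "M *\<^sub>v ?y = (M * adj_mat M) *\<^sub>v vec n x"
    by (rule assoc_mult_mat_vec[OF M adj_mat(1)[OF M] vec_carrier, symmetric])
  also have "\<dots> = (?d \<cdot>\<^sub>m 1\<^sub>m n) *\<^sub>v vec n x"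
    using adj_mat(2)[OF M] by simp
  also have "\<dots> = ?d \<cdot>\<^sub>v (1\<^sub>m n *\<^sub>v vec n x)"
    by auto
  finally have y: "M *\<^sub>v ?y = ?d \<cdot>\<^sub>v vec n x"
    by simp
  have "(\<lambda>i. \<Sum>r\<in>{0..<n}. (?y $ r / ?d) * U r i) = x"
  proof (intro ext)
    fix i
    show "(\<Sum>r\<in>{0..<n}. (?y $ r / ?d) * U r i) = x i"
    proof (cases "i < n")
      case True
      have "(M *\<^sub>v ?y) $ i = (\<Sum>r\<in>{0..<n}. U r i * ?y $ r)"
        using True adj_mat(1)[OF M] by (simp add: M_def scalar_prod_def)
      then have "(\<Sum>r\<in>{0..<n}. U r i * ?y $ r) = ?d * x i"
        using y True by simp
      then show ?thesis
        using det by (simp add: M_def sum_divide_distrib[symmetric] mult.commute)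
    next
      case False
      then show ?thesis using x U(2) by (simp add: is_vec_def)
    qed
  qed
  moreover have "(\<lambda>i. \<Sum>r\<in>{0..<n}. (?y $ r / ?d) * U r i) \<in> gen_space n A B G"
    using U(1) by (intro gen_space_sum gen_space.gen_smult) auto
  ultimately show ?thesis by simp
qed

text \<open>Syntax trees for the elements of \<open>gen_space n A B {b}\<close>: evaluating one tree along the
  family \<open>(A, Z + s Y, w + s v)\<close> gives coordinates that are polynomial in \<open>s\<close>.\<close>

datatype gen_expr = EBase | EZero | EAdd gen_expr gen_expr | EScale complex gen_expr
  | EMulA gen_expr | EMulB gen_expr

primrec eval_expr :: "nat \<Rightarrow> cmat \<Rightarrow> cmat \<Rightarrow> cvec \<Rightarrow> gen_expr \<Rightarrow> cvec" where
  "eval_expr n A B b EBase = b"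
| "eval_expr n A B b EZero = (\<lambda>i. 0)"
| "eval_expr n A B b (EAdd e1 e2) = (\<lambda>i. eval_expr n A B b e1 i + eval_expr n A B b e2 i)"
| "eval_expr n A B b (EScale c e) = (\<lambda>i. c * eval_expr n A B b e i)"
| "eval_expr n A B b (EMulA e) = mvec n A (eval_expr n A B b e)"
| "eval_expr n A B b (EMulB e) = mvec n B (eval_expr n A B b e)"

lemma eval_expr_in_gen_space: "eval_expr n A B b e \<in> gen_space n A B {b}"
  by (induct e) (auto intro: gen_space.intros)

lemma gen_space_singleton_eval_expr: "u \<in> gen_space n A B {b} \<Longrightarrow> \<exists>e. u = eval_expr n A B b e"
proof (induct rule: gen_space.induct)
  case (gen_base v)
  then show ?case by (intro exI[of _ EBase]) simp
next
  case gen_zero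
  then show ?case by (intro exI[of _ EZero]) simp
next
  case (gen_add v w)
  then obtain e1 e2 where "v = eval_expr n A B b e1" "w = eval_expr n A B b e2" by blast
  then show ?case by (intro exI[of _ "EAdd e1 e2"]) simp
next
  case (gen_smult v c)
  then obtain e where "v = eval_expr n A B b e" by blast
  then show ?case by (intro exI[of _ "EScale c e"]) simp
next
  case (gen_X v)
  then obtain e where "v = eval_expr n A B b e" by blast
  then show ?case by (intro exI[of _ "EMulA e"]) simp
next
  case (gen_Y v)
  then obtain e where "v = eval_expr n A B b e" by blast
  then show ?case by (intro exI[of _ "EMulB e"]) simp
qed

lemma polyfun_eval_expr:
  "polyfun (\<lambda>s. eval_expr n X (\<lambda>i j. Z i j + s * Y i j) (\<lambda>i. w i + s * v i) e i)"
proof (induct e arbitrary: i)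
  case EBase
  then show ?case by (auto intro!: polyfun_add polyfun_mult polyfun_const polyfun_ident)
next
  case (EMulA e)
  then show ?case unfolding eval_expr.simps mvec_def
    by (intro polyfun_sum polyfun_mult polyfun_const) auto
next
  case (EMulB e)
  then show ?case unfolding eval_expr.simps mvec_def
    by (intro polyfun_sum polyfun_mult polyfun_const polyfun_add polyfun_ident) auto
qed (simp_all add: polyfun_const polyfun_add polyfun_mult)

lemma cyclic_for_large_parameter:
  assumes X: "is_mat n n X" and Y: "is_mat n n Y" and Z: "is_mat n n Z"
    and w: "is_vec n w" and v: "is_vec n v"
    and cyclic: "{x. is_vec n x} \<subseteq> gen_space n X Z {w}"
  shows "\<exists>R. \<forall>s. R < norm s \<longrightarrow>
    {x. is_vec n x} \<subseteq> gen_space n X (\<lambda>i j. Z i j + s * Y i j) {\<lambda>i. w i + s * v i}"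
proof -
  define Z' where "Z' s = (\<lambda>i j. Z i j + s * Y i j)" for s :: complex
  define w' where "w' s = (\<lambda>i. w i + s * v i)" for s :: complex
  have "\<exists>e. r < n \<longrightarrow> std_basis r = eval_expr n X Z w e" for r
  proof (cases "r < n")
    case True
    then have "std_basis r \<in> gen_space n X Z {w}"
      by (intro subsetD[OF cyclic]) (simp add: is_vec_def std_basis_def)
    then show ?thesis
      using gen_space_singleton_eval_expr by blast
  qed simp
  then obtain E where E: "\<And>r. r < n \<Longrightarrow> std_basis r = eval_expr n X Z w (E r)"
    by metis
  \<comment> \<open>vectors of \<open>gen_space n X (Z' s) {w' s}\<close> that form the standard basis at \<open>s = 0\<close>\<close>
  define U where "U s r = eval_expr n X (Z' s) (w' s) (E r)" for s r
  have U_gen: "U s r \<in> gen_space n X (Z' s) {w' s}" for s r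
    unfolding U_def by (rule eval_expr_in_gen_space)
  have U_vec: "is_vec n (U s r)" for s r
    using Z Y w v by (intro gen_space_is_vec[OF X _ _ U_gen]) (auto simp: is_mat_def is_vec_def Z'_def w'_def)
  have "polyfun (\<lambda>s. U s r i)" for r i
    unfolding U_def Z'_def w'_def by (rule polyfun_eval_expr)
  then obtain p where p: "\<And>s. Determinant.det (Matrix.mat n n (\<lambda>(i, r). U s r i)) = poly p s"
    using polyfun_det[of "\<lambda>s i r. U s r i" n] unfolding polyfun_def by blast
  have "U 0 r = std_basis r" if "r < n" for r
    using E[OF that] by (simp add: U_def Z'_def w'_def)
  then have "Matrix.mat n n (\<lambda>(i, r). U 0 r i) = 1\<^sub>m n"
    by (intro eq_matI) (auto simp: std_basis_def)
  then have "poly p 0 = 1"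
    using p[of 0] by simp
  then have "finite {s. poly p s = 0}"
    by (intro poly_roots_finite) auto
  then have "bounded {s. poly p s = 0}"
    by (rule finite_imp_bounded)
  then obtain R where R: "\<And>s. poly p s = 0 \<Longrightarrow> norm s \<le> R"
    unfolding bounded_iff by blast
  have "{x. is_vec n x} \<subseteq> gen_space n X (Z' s) {w' s}" if "R < norm s" for s
  proof -
    have "poly p s \<noteq> 0"
      using R[of s] that by linarith
    then have "Determinant.det (Matrix.mat n n (\<lambda>(i, r). U s r i)) \<noteq> 0"
      by (simp add: p)
    from gen_space_if_det_ne_0[of n "U s", OF U_gen U_vec this]
    show ?thesis by blast
  qed
  then show ?thesis
    unfolding Z'_def w'_def by blast
qed

lemma eventually_cyclic_perturbation:
  assumes X: "is_mat n n X" and Y: "is_mat n n Y" and Z: "is_mat n n Z"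
    and w: "is_vec n w" and v: "is_vec n v"
    and cyclic: "{x. is_vec n x} \<subseteq> gen_space n X Z {w}"
  shows "\<forall>\<^sub>F t in at 0. {x. is_vec n x} \<subseteq> gen_space n X (\<lambda>i j. Y i j + t * Z i j) {\<lambda>i. v i + t * w i}"
proof -
  obtain R where R: "\<And>s. R < norm s \<Longrightarrow>
      {x. is_vec n x} \<subseteq> gen_space n X (\<lambda>i j. Z i j + s * Y i j) {\<lambda>i. w i + s * v i}"
    using cyclic_for_large_parameter[OF assms] by blast
  define R' where "R' = max R 1"
  have "{x. is_vec n x} \<subseteq> gen_space n X (\<lambda>i j. Y i j + t * Z i j) {\<lambda>i. v i + t * w i}"
    if t: "t \<noteq> 0" "norm t < 1 / R'" for t
  proof -
    have "R * norm t \<le> R' * norm t"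
      by (simp add: R'_def mult_right_mono)
    moreover have "R' * norm t < 1"
      using t(2) by (simp add: R'_def field_simps)
    ultimately have "R * norm t < 1"
      by linarith
    then have "R < norm (1 / t)"
      using t(1) by (simp add: norm_divide field_simps)
    have "(\<lambda>i j. Z i j + (1 / t) * Y i j) = (\<lambda>i j. (1 / t) * (Y i j + t * Z i j))"
      and "(\<lambda>i. w i + (1 / t) * v i) = (\<lambda>i. (1 / t) * (v i + t * w i))"
      using t(1) by (auto simp: field_simps)
    with R[OF \<open>R < norm (1 / t)\<close>] have "{x. is_vec n x} \<subseteq>
        gen_space n X (\<lambda>i j. (1 / t) * (Y i j + t * Z i j)) {\<lambda>i. (1 / t) * (v i + t * w i)}"
      by simp
    then show ?thesis
      using gen_space_scale[where c = "1 / t" and B = "\<lambda>i j. Y i j + t * Z i j" and b = "\<lambda>i. v i + t * w i"]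
      by blast
  qed
  then show ?thesis
    unfolding eventually_at
  proof (intro exI[of _ "1 / R'"] conjI ballI impI)
    show "1 / R' > 0"
      by (simp add: R'_def)
  qed (simp add: dist_norm)
qed

section \<open>The moduli space\<close>

lemma quotient_map_preimage_topology:
  fixes S :: "'a::topological_space set" and f :: "'a \<Rightarrow> 'b"
  defines "T \<equiv> topology (\<lambda>W. W \<subseteq> f ` S \<and> openin (top_of_set S) {q \<in> S. f q \<in> W})"
  shows "quotient_map (top_of_set S) T f"
proof -
  have open_T: "openin T W \<longleftrightarrow> W \<subseteq> f ` S \<and> openin (top_of_set S) {q \<in> S. f q \<in> W}" for W
    unfolding T_def topology_inverse'[OF istopology_preimage] ..
  have "{q \<in> S. f q \<in> f ` S} = S"
    by blast
  then have "openin T (f ` S)"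
    unfolding open_T by simp
  then have "topspace T = f ` S"
    using open_T openin_subset by (auto simp: topspace_def)
  then show ?thesis
    unfolding quotient_map_def open_T by auto
qed

text \<open>The component \<open>Jt\<close>, written with \<open>fst\<close> and \<open>snd\<close> so that its continuity is automatic.\<close>

definition Jt_of :: "quiv \<Rightarrow> cmat" where
  "Jt_of q = fst (snd (snd (snd (snd (snd (snd (snd q)))))))"

lemma Jt_of_simp [simp]: "Jt_of (X, Y, I, J, Xt, Yt, It, Jt, S) = Jt"
  by (simp add: Jt_of_def)

definition open_locus :: "nat \<Rightarrow> nat \<Rightarrow> nat \<Rightarrow> quiv set" where
  "open_locus N M1 M2 = {(X, Y, I, J, Xt, Yt, It, Jt, S) \<in> stab_locus N M1 M2.
     {v. is_vec M2 v} \<subseteq> gen_space M2 Xt Yt (img 1 It)}"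

definition Jt0_locus :: "nat \<Rightarrow> nat \<Rightarrow> nat \<Rightarrow> quiv set" where
  "Jt0_locus N M1 M2 = {q \<in> stab_locus N M1 M2. Jt_of q = Defs.zero_mat}"

lemma moduli_open_eq: "moduli_open N M1 M2 = orbit N M1 M2 ` open_locus N M1 M2"
  by (simp add: moduli_open_def open_locus_def)

lemma moduli_Jt0_eq: "moduli_Jt0 N M1 M2 = orbit N M1 M2 ` Jt0_locus N M1 M2"
proof -
  have "{(X, Y, I, J, Xt, Yt, It, Jt, S) \<in> stab_locus N M1 M2. Jt = Defs.zero_mat} = Jt0_locus N M1 M2"
    unfolding Jt0_locus_def Jt_of_def by (simp add: split_def)
  then show ?thesis
    by (simp add: moduli_Jt0_def)
qed

lemma mem_orbit_self:
  assumes "q \<in> stab_locus N M1 M2"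
  shows "q \<in> orbit N M1 M2 q"
proof -
  obtain X Y I J Xt Yt It Jt S where q: "q = (X, Y, I, J, Xt, Yt, It, Jt, S)"
    by (metis prod.exhaust)
  have "Defs.invertible_mat M (id_mat M) (id_mat M)" for M
    by (simp add: Defs.invertible_mat_def is_mat_id_mat mmul_id_mat_left[OF is_mat_id_mat])
  moreover have "q = act N M1 M2 (id_mat M1) (id_mat M1) (id_mat M2) (id_mat M2) q"
    using assms unfolding q stab_locus_def act_def
    by (clarsimp simp: mmul_id_mat_left mmul_id_mat_right)
  ultimately show ?thesis
    unfolding orbit_def mem_Collect_eq by (intro exI conjI)
qed

lemma Jt_of_act: "Jt_of (act N M1 M2 g gi h hi (X, Y, I, J, Xt, Yt, It, Jt, S)) = mmul M2 Jt hi"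
  by (simp add: act_def)

lemma Jt0_locus_saturated:
  "{p \<in> stab_locus N M1 M2. orbit N M1 M2 p \<in> orbit N M1 M2 ` Jt0_locus N M1 M2} \<subseteq> Jt0_locus N M1 M2"
proof
  fix p
  assume "p \<in> {p \<in> stab_locus N M1 M2. orbit N M1 M2 p \<in> orbit N M1 M2 ` Jt0_locus N M1 M2}"
  then obtain q where p: "p \<in> stab_locus N M1 M2" and q: "q \<in> Jt0_locus N M1 M2"
    and "orbit N M1 M2 p = orbit N M1 M2 q"
    by blast
  then have "p \<in> orbit N M1 M2 q"
    using mem_orbit_self[OF p] by simp
  then obtain g gi h hi where p_act: "p = act N M1 M2 g gi h hi q"
    unfolding orbit_def by blast
  obtain X Y I J Xt Yt It Jt S where q_tuple: "q = (X, Y, I, J, Xt, Yt, It, Jt, S)"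
    by (metis prod.exhaust)
  have "Jt_of p = Defs.zero_mat"
    using q unfolding p_act q_tuple Jt_of_act by (simp add: Jt0_locus_def mmul_def Defs.zero_mat_def)
  then show "p \<in> Jt0_locus N M1 M2"
    using p by (simp add: Jt0_locus_def)
qed

lemma closedin_Jt0_locus: "closedin (top_of_set (stab_locus N M1 M2)) (Jt0_locus N M1 M2)"
proof -
  have "closed {q. Jt_of q = Defs.zero_mat}"
    unfolding Jt_of_def by (intro closed_Collect_eq continuous_intros)
  moreover have "Jt0_locus N M1 M2 = stab_locus N M1 M2 \<inter> {q. Jt_of q = Defs.zero_mat}"
    by (auto simp: Jt0_locus_def)
  ultimately show ?thesis
    by (simp add: closedin_closed_Int)
qed

lemma open_locus_subset_Jt0_locus: "open_locus N M1 M2 \<subseteq> Jt0_locus N M1 M2"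
proof
  fix q
  assume q: "q \<in> open_locus N M1 M2"
  obtain X Y I J Xt Yt It Jt S where q_tuple: "q = (X, Y, I, J, Xt, Yt, It, Jt, S)"
    by (metis prod.exhaust)
  have "is_mat M2 M2 Xt" "is_mat M2 M2 Yt" "is_mat M2 1 It" "is_mat 1 M2 Jt"
    "(\<lambda>i j. mmul M2 Xt Yt i j - mmul M2 Yt Xt i j + mmul 1 It Jt i j) = Defs.zero_mat"
    "{v. is_vec M2 v} \<subseteq> gen_space M2 Xt Yt (img 1 It)"
    using q unfolding q_tuple open_locus_def stab_locus_def by auto
  then have "Jt = Defs.zero_mat"
    by (rule cyclic_I_imp_J_eq_0)
  then show "q \<in> Jt0_locus N M1 M2"
    using q by (simp add: Jt0_locus_def open_locus_def q_tuple)
qed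

lemma eventually_perturbation_in_open_locus:
  assumes "(X, Y, I, J, Xt, Yt, It, Jt, S) \<in> Jt0_locus N M1 M2"
  shows "\<exists>Z W. \<forall>\<^sub>F t in at 0.
    (X, Y, I, J, Xt, \<lambda>i j. Yt i j + t * Z i j, \<lambda>i j. It i j + t * W i j, Jt, S) \<in> open_locus N M1 M2"
proof -
  note assms[unfolded Jt0_locus_def mem_Collect_eq Jt_of_simp]
  then have stable: "is_mat M1 M1 X" "is_mat M1 M1 Y" "is_mat M1 N I" "is_mat N M1 J"
      "is_mat 1 M2 Jt" "is_mat M2 M1 S"
      "(\<lambda>i j. mmul M1 X Y i j - mmul M1 Y X i j + mmul N I J i j) = Defs.zero_mat"
      "{v. is_vec M1 v} \<subseteq> gen_space M1 X Y (img N I)"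
    and mats: "is_mat M2 M2 Xt" "is_mat M2 M2 Yt" "is_mat M2 1 It"
    and moment: "(\<lambda>i j. mmul M2 Xt Yt i j - mmul M2 Yt Xt i j + mmul 1 It Jt i j) = Defs.zero_mat"
    and Jt: "Jt = Defs.zero_mat"
    by (auto simp: stab_locus_def)
  obtain Z w where Z: "is_mat M2 M2 Z" and w: "is_vec M2 w" and commute: "mmul M2 Xt Z = mmul M2 Z Xt"
    and cyclic: "{v. is_vec M2 v} \<subseteq> gen_space M2 Xt Z {w}"
    using exists_commuting_cyclic_partner[OF mats(1)] by blast
  define W :: cmat where "W = (\<lambda>i j. if j = 0 then w i else 0)"
  have v: "is_vec M2 (\<lambda>i. It i 0)"
    using mats(3) by (simp add: is_vec_def is_mat_def)
  have XY: "mmul M2 Xt Yt = mmul M2 Yt Xt"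
  proof (intro ext)
    fix i j
    show "mmul M2 Xt Yt i j = mmul M2 Yt Xt i j"
      using fun_cong[OF fun_cong[OF moment, of i], of j] Jt by (simp add: mmul_def Defs.zero_mat_def)
  qed
  have member: "(X, Y, I, J, Xt, \<lambda>i j. Yt i j + t * Z i j, \<lambda>i j. It i j + t * W i j, Jt, S) \<in> open_locus N M1 M2"
    if cyclic_t: "{v. is_vec M2 v} \<subseteq> gen_space M2 Xt (\<lambda>i j. Yt i j + t * Z i j) {\<lambda>i. It i 0 + t * w i}"
    for t
  proof -
    let ?Yt = "\<lambda>i j. Yt i j + t * Z i j" and ?It = "\<lambda>i j. It i j + t * W i j"
    have moment_t: "(\<lambda>i j. mmul M2 Xt ?Yt i j - mmul M2 ?Yt Xt i j + mmul 1 ?It Jt i j) = Defs.zero_mat"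
    proof (intro ext)
      fix i j
      have "mmul M2 Xt ?Yt i j = mmul M2 Xt Yt i j + t * mmul M2 Xt Z i j"
        and "mmul M2 ?Yt Xt i j = mmul M2 Yt Xt i j + t * mmul M2 Z Xt i j"
        by (simp_all add: mmul_def algebra_simps sum.distrib sum_distrib_left)
      then show "mmul M2 Xt ?Yt i j - mmul M2 ?Yt Xt i j + mmul 1 ?It Jt i j = Defs.zero_mat i j"
        unfolding XY commute using Jt by (simp add: mmul_def Defs.zero_mat_def)
    qed
    have "(\<lambda>i. It i 0 + t * w i) \<in> img 1 ?It"
      unfolding img_def by (rule CollectI, rule exI[of _ "\<lambda>i. if i = 0 then 1 else 0"])
        (auto simp: mvec_def W_def is_vec_def)
    then have "gen_space M2 Xt ?Yt {\<lambda>i. It i 0 + t * w i} \<subseteq> gen_space M2 Xt ?Yt (img 1 ?It)"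
      by (intro gen_space_mono) simp
    then have cyclic_It: "{v. is_vec M2 v} \<subseteq> gen_space M2 Xt ?Yt (img 1 ?It)"
      by (rule subset_trans[OF cyclic_t])
    have "gen_space M2 Xt ?Yt (img 1 ?It) \<subseteq> gen_space M2 Xt ?Yt (img 1 ?It \<union> img M1 S)"
      by (intro gen_space_mono) simp
    then have cyclic_It_S: "{v. is_vec M2 v} \<subseteq> gen_space M2 Xt ?Yt (img 1 ?It \<union> img M1 S)"
      by (rule subset_trans[OF cyclic_It])
    have "is_mat M2 M2 ?Yt" "is_mat M2 1 ?It"
      using mats Z w by (auto simp: is_mat_def is_vec_def W_def)
    then show ?thesis
      using stable mats moment_t cyclic_It cyclic_It_S unfolding open_locus_def stab_locus_def by simp
  qed
  show ?thesis
    by (rule exI[of _ Z], rule exI[of _ W])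
      (rule eventually_mono[OF eventually_cyclic_perturbation[OF mats(1,2) Z w v cyclic] member])
qed

lemma continuous_on_affine_mat: "continuous_on UNIV (\<lambda>t::complex. (\<lambda>i j. A i j + t * B i j) :: cmat)"
  by (intro continuous_on_coordinatewise_then_product continuous_intros)

lemma Jt0_locus_subset_closure_open_locus:
  "Jt0_locus N M1 M2 \<subseteq> top_of_set (stab_locus N M1 M2) closure_of open_locus N M1 M2"
proof
  fix q
  assume q: "q \<in> Jt0_locus N M1 M2"
  obtain X Y I J Xt Yt It Jt S where q_tuple: "q = (X, Y, I, J, Xt, Yt, It, Jt, S)"
    by (metis prod.exhaust)
  obtain Z W where near: "\<forall>\<^sub>F t in at 0.
      (X, Y, I, J, Xt, \<lambda>i j. Yt i j + t * Z i j, \<lambda>i j. It i j + t * W i j, Jt, S) \<in> open_locus N M1 M2"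
    using eventually_perturbation_in_open_locus q unfolding q_tuple by blast
  define line where "line t = (X, Y, I, J, Xt, \<lambda>i j. Yt i j + t * Z i j, \<lambda>i j. It i j + t * W i j, Jt, S)"
    for t :: complex
  have "continuous_on UNIV line"
    unfolding line_def by (intro continuous_on_Pair continuous_on_const continuous_on_affine_mat)
  then have "(line \<longlongrightarrow> line 0) (at 0)"
    by (simp add: continuous_on_eq_continuous_at isCont_def)
  moreover have "line 0 = q"
    by (simp add: line_def q_tuple)
  moreover have "\<forall>\<^sub>F t in at 0. line t \<in> closure (open_locus N M1 M2)"
    using near unfolding line_def by (rule eventually_mono) (rule closure_subset[THEN subsetD])
  ultimately have "q \<in> closure (open_locus N M1 M2)"
    using Lim_in_closed_set[OF closed_closure _ trivial_limit_at] by metis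
  moreover have "open_locus N M1 M2 \<subseteq> stab_locus N M1 M2"
    using open_locus_subset_Jt0_locus by (auto simp: Jt0_locus_def)
  moreover have "q \<in> stab_locus N M1 M2"
    using q by (simp add: Jt0_locus_def)
  ultimately show "q \<in> top_of_set (stab_locus N M1 M2) closure_of open_locus N M1 M2"
    by (simp add: closure_of_subtopology Int_absorb1)
qed

theorem proposition3:
  fixes N M1 M2 :: nat
  shows "moduli_Jt0 N M1 M2 = moduli_top N M1 M2 closure_of moduli_open N M1 M2"
proof -
  let ?X = "top_of_set (stab_locus N M1 M2)" and ?T = "moduli_top N M1 M2" and ?f = "orbit N M1 M2"
  have quotient: "quotient_map ?X ?T ?f"
    unfolding moduli_top_def moduli_def by (rule quotient_map_preimage_topology)
  then have "\<forall>U. closedin ?X U \<and> {x \<in> topspace ?X. ?f x \<in> ?f ` U} \<subseteq> U \<longrightarrow> closedin ?T (?f ` U)"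
    unfolding quotient_map_saturated_closed by blast
  then have "closedin ?T (?f ` Jt0_locus N M1 M2)"
    using closedin_Jt0_locus Jt0_locus_saturated by simp
  moreover have "?f ` open_locus N M1 M2 \<subseteq> ?f ` Jt0_locus N M1 M2"
    using open_locus_subset_Jt0_locus by (rule image_mono)
  ultimately have closure_in_Jt0: "?T closure_of (?f ` open_locus N M1 M2) \<subseteq> ?f ` Jt0_locus N M1 M2"
    by (rule closure_of_minimal[rotated])
  have "?f ` Jt0_locus N M1 M2 \<subseteq> ?f ` (?X closure_of open_locus N M1 M2)"
    using Jt0_locus_subset_closure_open_locus by (rule image_mono)
  then have "?f ` Jt0_locus N M1 M2 \<subseteq> ?T closure_of (?f ` open_locus N M1 M2)"
    using continuous_map_image_closure_subset[OF quotient_imp_continuous_map[OF quotient]]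
    by (rule subset_trans)
  with closure_in_Jt0 show ?thesis
    unfolding moduli_Jt0_eq moduli_open_eq by (rule antisym[rotated])
qed

end
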